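(* Let $q$ be an odd prime power, $d$ a positive integer, and $\varphi_d$ the coloring defined below. If $s_1,\dots,s_t \in (\mathbb{F}_q^* )^d$ form a $t$-falling star under $\varphi_d$ (with the labeling in the definition below), then $s_1,\dots,s_{t-1}$ are linearly independent. Consequently, for every nonempty finite subset $T \subseteq (\mathbb{F}_q^* )^d$, $\mathrm{rk}(T) \ge \mathrm{FS}(T) - 1$. Moreover, if there exist a vector $v \in (\mathbb{F}_q^* )^d\setminus T$ and a color $\gamma$ with $\varphi_d(v,x)=\gamma$ for all $x \in T$, then $\mathrm{rk}(T) \ge \mathrm{FS}(T)$.
   Context: $\mathbb{F}_q^*$ is the set of nonzero elements of $\mathbb{F}_q$, endowed with an arbitrary fixed linear order; $(\mathbb{F}_q^* )^d$ is ordered lexicographically with respect to it. Let $C_d = \mathrm{DOT} \sqcup \mathrm{ZERO}\sqcup\mathrm{UP}\sqcup\mathrm{DOWN}$, where $\mathrm{DOT} = \mathbb{F}_q^*$ and ZERO, UP, DOWN are three disjoint copies of $\{1,\dots,d\}\times \mathbb{F}_q$. For distinct $x<y$ in $(\mathbb{F}_q^* )^d$, let $i$ be the first coordinate where $x$ and $y$ differ, and $x\cdot y$ the standard dot product; $\varphi_d(x,y)=\varphi_d(y,x)$ is $(i,x_i+y_i)$ in ZERO if $x\cdot y=0$; $(i,x_i+y_i)$ in UP if $x\cdot y\ne 0$ and $x\cdot y=x\cdot x$; $(i,x_i+y_i)$ in DOWN if $x\cdot y\notin\{0,x\cdot x\}$ and $x\cdot y=y\cdot y$; and $x\cdot y\in\mathrm{DOT}$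 otherwise. Distinct vectors $s_1,\dots,s_t$ form a $t$-falling star under $\varphi_d$ if there are colors $\alpha_2,\dots,\alpha_t$ with $\varphi_d(s_i,s_j) = \alpha_i$ for all $1 \le j < i \le t$. $\mathrm{FS}(T)$ is the maximum $t$ such that $T$ contains a $t$-falling star. $\mathrm{rk}(T)$ is the dimension of the linear span of $T$. *)

theory Defs
  imports Main "HOL.Vector_Spaces" "HOL-Library.Function_Algebras" "HOL-Library.Cardinality"
begin

text \<open>Vectors of (F_q^*)^d are represented as functions nat => 'a which are nonzero
on coordinates 0..d-1 and zero elsewhere (coordinates are 0-indexed).\<close>

definition nzvecs :: "nat \<Rightarrow> (nat \<Rightarrow> 'a::field) set" where
  "nzvecs d = {x. (\<forall>i<d. x i \<noteq> 0) \<and> (\<forall>i\<ge>d. x i = 0)}"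

definition dotp :: "nat \<Rightarrow> (nat \<Rightarrow> 'a::field) \<Rightarrow> (nat \<Rightarrow> 'a) \<Rightarrow> 'a" where
  "dotp d x y = (\<Sum>i<d. x i * y i)"

definition vscale :: "'a::field \<Rightarrow> (nat \<Rightarrow> 'a) \<Rightarrow> (nat \<Rightarrow> 'a)" where
  "vscale c x = (\<lambda>i. c * x i)"

definition rk :: "(nat \<Rightarrow> 'a::field) set \<Rightarrow> nat" where
  "rk T = vector_space.dim vscale T"

definition lin_indep :: "(nat \<Rightarrow> 'a::field) set \<Rightarrow> bool" where
  "lin_indep S = (\<not> module.dependent vscale S)"

definition lexless :: "('a \<times> 'a) set \<Rightarrow> nat \<Rightarrow> (nat \<Rightarrow> 'a) \<Rightarrow> (nat \<Rightarrow> 'a) \<Rightarrow> bool" where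
  "lexless r d x y = (\<exists>i<d. (\<forall>j<i. x j = y j) \<and> x i \<noteq> y i \<and> (x i, y i) \<in> r)"

datatype 'a color = DOT 'a | ZERO nat 'a | UP nat 'a | DOWN nat 'a

definition phi_ord :: "nat \<Rightarrow> (nat \<Rightarrow> 'a::field) \<Rightarrow> (nat \<Rightarrow> 'a) \<Rightarrow> 'a color" where
  "phi_ord d x y =
    (let i = (LEAST i. x i \<noteq> y i); s = x i + y i; p = dotp d x y in
     if p = 0 then ZERO i s
     else if p = dotp d x x then UP i s
     else if p = dotp d y y then DOWN i s
     else DOT p)"

definition phi :: "('a \<times> 'a) set \<Rightarrow> nat \<Rightarrow> (nat \<Rightarrow> 'a::field) \<Rightarrow> (nat \<Rightarrow> 'a) \<Rightarrow> 'a color" where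
  "phi r d x y = (if lexless r d x y then phi_ord d x y else phi_ord d y x)"

text \<open>s!0,...,s!(t-1) correspond to s_1,...,s_t.\<close>
definition falling_star :: "('a \<times> 'a) set \<Rightarrow> nat \<Rightarrow> (nat \<Rightarrow> 'a::field) list \<Rightarrow> bool" where
  "falling_star r d s = (distinct s \<and> set s \<subseteq> nzvecs d \<and>
     (\<exists>\<alpha>. \<forall>i j. j < i \<and> i < length s \<longrightarrow> phi r d (s!i) (s!j) = \<alpha> i))"

definition FS :: "('a \<times> 'a) set \<Rightarrow> nat \<Rightarrow> (nat \<Rightarrow> 'a::field) set \<Rightarrow> nat" where
  "FS r d T = Max {length s | s. falling_star r d s \<and> set s \<subseteq> T}"

end

theory Submission imports Defs begin

text \<open>All vectors receiving one colour from a fixed vector \<open>x\<close> lie on an affine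
hyperplane \<open>w \<cdot> z = c\<close> with \<open>c \<noteq> 0\<close> that misses \<open>x\<close>: for a colour \<open>DOT p\<close> take
\<open>w = x\<close> and \<open>c = p\<close>; a colour with label \<open>(k, x_k + z_k)\<close> fixes the coordinate \<open>z_k\<close>, so
take for \<open>w\<close> the \<open>k\<close>-th unit vector. In a falling star \<open>s_0, ..., s_n\<close> the vectors
\<open>s_0, ..., s_(i-1)\<close> all receive one colour from \<open>s_i\<close>, which gives a functional \<open>w_i\<close>
that is a nonzero constant \<open>c_i\<close> on them but not at \<open>s_i\<close>. Subtracting \<open>c_i / c_n\<close> times
\<open>w_n\<close> turns \<open>w_i\<close> into a functional vanishing on \<open>s_0, ..., s_(i-1)\<close> but not at \<open>s_i\<close>,
so \<open>s_0, ..., s_(n-1)\<close> are independent. A vector seeing all of \<open>T\<close> in one colour can be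
appended to every falling star in \<open>T\<close>, which gains one in the bound.\<close>

interpretation vs: vector_space "vscale :: 'a::field \<Rightarrow> (nat \<Rightarrow> 'a) \<Rightarrow> (nat \<Rightarrow> 'a)"
  by unfold_locales (auto simp: vscale_def fun_eq_iff algebra_simps)

lemma dotp_commute: "dotp d x y = dotp d y x"
  unfolding dotp_def by (simp add: ac_simps)

lemma dotp_unit_vector:
  assumes "k < d"
  shows "dotp d (\<lambda>l. if l = k then 1 else 0) y = y k"
  using assms unfolding dotp_def by (simp add: if_distrib[of "\<lambda>a. a * _"] cong: if_cong)

lemma dotp_diff_scaled:
  "dotp d (\<lambda>l. w l - a * v l) y = dotp d w y - a * dotp d v y"
  unfolding dotp_def by (simp add: sum_subtractf sum_distrib_left algebra_simps)

lemma dotp_vanishes_on_span: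
  assumes "z \<in> vs.span S" and "\<forall>y\<in>S. dotp d w y = 0"
  shows "dotp d w z = 0"
  using assms(1)
proof (induct rule: vs.span_induct_alt)
  case base
  then show ?case by (simp add: dotp_def)
next
  case (step c x y)
  have "dotp d w (vscale c x + y) = c * dotp d w x + dotp d w y"
    by (simp add: dotp_def vscale_def sum_distrib_left sum.distrib algebra_simps)
  also have "\<dots> = 0"
    using step assms(2) by simp
  finally show ?case .
qed

lemma card_le_rk:
  assumes "B \<subseteq> T" and "finite T" and "lin_indep B"
  shows "card B \<le> rk T"
proof -
  obtain B' where "B \<subseteq> B'" "B' \<subseteq> T" "vs.independent B'" "T \<subseteq> vs.span B'"
    using vs.maximal_independent_subset_extend[of B T] assms unfolding lin_indep_def by blast
  then have "card B' = rk T"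
    unfolding rk_def using vs.basis_card_eq_dim by blast
  moreover have "card B \<le> card B'"
    using \<open>B \<subseteq> B'\<close> \<open>B' \<subseteq> T\<close> assms(2) by (meson card_mono finite_subset)
  ultimately show ?thesis by simp
qed

lemma independent_take_if_triangular:
  assumes "n \<le> length s"
    and "\<And>m. m < n \<Longrightarrow> \<exists>u. (\<forall>j<m. dotp d u (s ! j) = 0) \<and> dotp d u (s ! m) \<noteq> 0"
  shows "vs.independent (set (take n s))"
  using assms
proof (induction n)
  case 0
  then show ?case by (simp add: vs.independent_empty)
next
  case (Suc n)
  obtain u where u0: "\<forall>j<n. dotp d u (s ! j) = 0" and u: "dotp d u (s ! n) \<noteq> 0"
    using Suc.prems(2) by blast
  have "\<forall>y\<in>set (take n s). dotp d u y = 0"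
    using u0 by (auto simp: in_set_conv_nth)
  then have "s ! n \<notin> vs.span (set (take n s))"
    using u dotp_vanishes_on_span by blast
  moreover have "vs.independent (set (take n s))"
    using Suc by simp
  ultimately show ?case
    using Suc.prems(1) by (simp add: take_Suc_conv_app_nth vs.independent_insertI)
qed

lemma phi_ord_cases:
  assumes "x \<in> nzvecs d" and "y \<in> nzvecs d" and "x \<noteq> y"
  obtains (dot) "phi_ord d x y = DOT (dotp d x y)" "dotp d x y \<noteq> 0"
      "dotp d x y \<noteq> dotp d x x" "dotp d x y \<noteq> dotp d y y"
    | (coord) k where "k < d" "x k \<noteq> y k"
      "phi_ord d x y \<in> {ZERO k (x k + y k), UP k (x k + y k), DOWN k (x k + y k)}"
proof -
  define k where "k = (LEAST i. x i \<noteq> y i)"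
  define p where "p = dotp d x y"
  obtain l where l: "x l \<noteq> y l"
    using assms(3) by auto
  then have "l < d"
    using assms(1,2) unfolding nzvecs_def by (cases "l < d") auto
  moreover have "k \<le> l"
    unfolding k_def using l by (rule Least_le)
  ultimately have "k < d" by simp
  have "x k \<noteq> y k"
    unfolding k_def using l by (rule LeastI)
  have phi_ord_eq: "phi_ord d x y = (if p = 0 then ZERO k (x k + y k)
      else if p = dotp d x x then UP k (x k + y k)
      else if p = dotp d y y then DOWN k (x k + y k) else DOT p)"
    unfolding phi_ord_def Let_def k_def p_def ..
  show thesis
  proof (cases "p = 0 \<or> p = dotp d x x \<or> p = dotp d y y")
    case True
    then show thesis
      using coord[OF \<open>k < d\<close> \<open>x k \<noteq> y k\<close>] unfolding phi_ord_eq by auto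
  next
    case False
    then show thesis
      using dot unfolding phi_ord_eq p_def by simp
  qed
qed

lemma phi_cases:
  assumes "x \<in> nzvecs d" and "y \<in> nzvecs d" and "x \<noteq> y"
  obtains (dot) "phi r d x y = DOT (dotp d x y)" "dotp d x y \<noteq> 0"
      "dotp d x y \<noteq> dotp d x x" "dotp d x y \<noteq> dotp d y y"
    | (coord) k where "k < d" "x k \<noteq> y k"
      "phi r d x y \<in> {ZERO k (x k + y k), UP k (x k + y k), DOWN k (x k + y k)}"
proof (cases "lexless r d x y")
  case True
  then have "phi r d x y = phi_ord d x y"
    unfolding phi_def by simp
  with assms show thesis
    by (cases rule: phi_ord_cases) (simp_all add: dot coord)
next
  case False
  then have "phi r d x y = phi_ord d y x"
    unfolding phi_def by simp
  with assms(2,1) assms(3)[symmetric] show thesis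
    by (cases rule: phi_ord_cases) (simp_all add: dot coord dotp_commute add.commute)
qed

lemma phi_class_in_hyperplane:
  assumes x: "x \<in> nzvecs d" and y: "y \<in> nzvecs d" and "x \<noteq> y"
  obtains w c where "c \<noteq> 0" "dotp d w x \<noteq> c"
    "\<And>z. z \<in> nzvecs d \<Longrightarrow> z \<noteq> x \<Longrightarrow> phi r d x z = phi r d x y \<Longrightarrow> dotp d w z = c"
  using x y \<open>x \<noteq> y\<close>
proof (cases rule: phi_cases[where r = r])
  case dot
  show thesis
  proof (rule that[of "dotp d x y" x])
    fix z assume z: "z \<in> nzvecs d" "z \<noteq> x" and col: "phi r d x z = phi r d x y"
    from x z(1) z(2)[symmetric] show "dotp d x z = dotp d x y"
      by (cases rule: phi_cases[where r = r]) (use col dot in auto)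
  qed (use dot in auto)
next
  case (coord k)
  have "y k \<noteq> 0"
    using y \<open>k < d\<close> unfolding nzvecs_def by blast
  show thesis
  proof (rule that[of "y k" "\<lambda>l. if l = k then 1 else 0"])
    fix z assume z: "z \<in> nzvecs d" "z \<noteq> x" and col: "phi r d x z = phi r d x y"
    from x z(1) z(2)[symmetric] have "z k = y k"
      by (cases rule: phi_cases[where r = r]) (use col coord in auto)
    then show "dotp d (\<lambda>l. if l = k then 1 else 0) z = y k"
      using \<open>k < d\<close> by (simp add: dotp_unit_vector)
  qed (use coord \<open>y k \<noteq> 0\<close> in \<open>auto simp: dotp_unit_vector\<close>)
qed

lemma falling_star_level_functional:
  assumes fs: "falling_star r d s" and "0 < i" and "i < length s"
  obtains w c where "c \<noteq> 0" "\<forall>j<i. dotp d w (s ! j) = c" "dotp d w (s ! i) \<noteq> c"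
proof -
  obtain \<alpha> where \<alpha>: "\<And>i j. j < i \<Longrightarrow> i < length s \<Longrightarrow> phi r d (s ! i) (s ! j) = \<alpha> i"
    using fs unfolding falling_star_def by blast
  have mem: "\<And>j. j < length s \<Longrightarrow> s ! j \<in> nzvecs d"
    using fs unfolding falling_star_def by auto
  have ne: "\<And>j. j < i \<Longrightarrow> s ! j \<noteq> s ! i"
    using fs \<open>i < length s\<close> unfolding falling_star_def by (simp add: nth_eq_iff_index_eq)
  have "0 < length s"
    using assms(3) by linarith
  obtain w c where "c \<noteq> 0" "dotp d w (s ! i) \<noteq> c" and on_class:
    "\<And>z. z \<in> nzvecs d \<Longrightarrow> z \<noteq> s ! i \<Longrightarrow> phi r d (s ! i) z = phi r d (s ! i) (s ! 0) \<Longrightarrow>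
      dotp d w z = c"
    by (rule phi_class_in_hyperplane[where r = r, OF mem[OF assms(3)] mem[OF \<open>0 < length s\<close>]
          ne[OF assms(2), symmetric]]) blast
  have "dotp d w (s ! j) = c" if "j < i" for j
  proof (rule on_class)
    show "s ! j \<in> nzvecs d" and "s ! j \<noteq> s ! i"
      using that assms(3) mem ne by auto
    show "phi r d (s ! i) (s ! j) = phi r d (s ! i) (s ! 0)"
      using \<alpha>[OF that assms(3)] \<alpha>[OF assms(2,3)] by simp
  qed
  then show thesis
    using that \<open>c \<noteq> 0\<close> \<open>dotp d w (s ! i) \<noteq> c\<close> by blast
qed

lemma falling_star_independent:
  assumes "falling_star r d s"
  shows "lin_indep (set (take (length s - 1) s))"
proof (cases "length s < 2")
  case True
  then show ?thesis by (simp add: lin_indep_def vs.independent_empty)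
next
  case False
  obtain w' c' where "c' \<noteq> 0" and last: "\<forall>j<length s - 1. dotp d w' (s ! j) = c'"
    by (rule falling_star_level_functional[OF assms, of "length s - 1"]) (use False in auto)
  have "\<exists>u. (\<forall>j<m. dotp d u (s ! j) = 0) \<and> dotp d u (s ! m) \<noteq> 0"
    if m: "m < length s - 1" for m
  proof (cases "m = 0")
    case True
    then show ?thesis using last \<open>c' \<noteq> 0\<close> m by blast
  next
    case False
    obtain w c where "\<forall>j<m. dotp d w (s ! j) = c" "dotp d w (s ! m) \<noteq> c"
      by (rule falling_star_level_functional[OF assms, of m]) (use False m in auto)
    moreover define u where "u = (\<lambda>l. w l - c / c' * w' l)"
    then have "dotp d u z = dotp d w z - c / c' * dotp d w' z" for z
      by (simp only: dotp_diff_scaled)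
    ultimately have "(\<forall>j<m. dotp d u (s ! j) = 0) \<and> dotp d u (s ! m) \<noteq> 0"
      using last m \<open>c' \<noteq> 0\<close> by simp
    then show ?thesis by blast
  qed
  then show ?thesis
    unfolding lin_indep_def by (intro independent_take_if_triangular) auto
qed

lemma falling_star_snoc:
  assumes "falling_star r d s" and "set s \<subseteq> T" and "v \<in> nzvecs d" and "v \<notin> T"
    and "\<forall>x\<in>T. phi r d v x = \<gamma>"
  shows "falling_star r d (s @ [v])"
proof -
  obtain \<alpha> where \<alpha>: "\<And>i j. j < i \<Longrightarrow> i < length s \<Longrightarrow> phi r d (s ! i) (s ! j) = \<alpha> i"
    using assms(1) unfolding falling_star_def by blast
  have "s ! j \<in> T" if "j < length s" for j
    using assms(2) that by (meson nth_mem subsetD)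
  then have "phi r d ((s @ [v]) ! i) ((s @ [v]) ! j) = (\<alpha>(length s := \<gamma>)) i"
    if "j < i" "i < length (s @ [v])" for i j
    using that \<alpha>[of j i] assms(5) by (auto simp: nth_append)
  moreover have "distinct (s @ [v])" and "set (s @ [v]) \<subseteq> nzvecs d"
    using assms(1-4) unfolding falling_star_def by auto
  ultimately show ?thesis
    unfolding falling_star_def by blast
qed

lemma FS_le:
  assumes "finite T" and "\<And>s. falling_star r d s \<Longrightarrow> set s \<subseteq> T \<Longrightarrow> length s \<le> b"
  shows "FS r d T \<le> b"
proof -
  let ?L = "{length s | s. falling_star r d s \<and> set s \<subseteq> T}"
  have "falling_star r d []"
    unfolding falling_star_def by simp
  then have "?L \<noteq> {}" by force
  moreover have "?L \<subseteq> {..card T}"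
    using assms(1) by (auto simp: falling_star_def intro!: card_mono simp flip: distinct_card)
  ultimately have "FS r d T \<in> ?L"
    unfolding FS_def by (meson Max_in finite_atMost finite_subset)
  then show ?thesis
    using assms(2) by force
qed

lemma FS_le_rk_Suc:
  assumes "finite T"
  shows "FS r d T \<le> rk T + 1"
proof (rule FS_le[OF assms])
  fix s assume fs: "falling_star r d s" and "set s \<subseteq> T"
  then have "set (take (length s - 1) s) \<subseteq> T"
    using set_take_subset by fast
  from card_le_rk[OF this assms falling_star_independent[OF fs]] show "length s \<le> rk T + 1"
    using fs by (simp add: falling_star_def distinct_card)
qed

lemma FS_le_rk_if_monochromatic_apex:
  assumes "finite T" and "v \<in> nzvecs d" and "v \<notin> T" and "\<forall>x\<in>T. phi r d v x = \<gamma>"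
  shows "FS r d T \<le> rk T"
proof (rule FS_le[OF assms(1)])
  fix s assume fs: "falling_star r d s" and sT: "set s \<subseteq> T"
  have "lin_indep (set s)"
    using falling_star_independent[OF falling_star_snoc[OF fs sT assms(2-4)]] by simp
  from card_le_rk[OF sT assms(1) this] show "length s \<le> rk T"
    using fs by (simp add: falling_star_def distinct_card)
qed

theorem corollary3p5:
  fixes r :: "('a::{field,finite} \<times> 'a) set" and d :: nat
  assumes "odd CARD('a)"
    and "d > 0"
    and "linear_order_on (UNIV - {0}) r"
  shows "(\<forall>s. falling_star r d s \<longrightarrow> lin_indep (set (take (length s - 1) s)))
    \<and> (\<forall>T. T \<subseteq> nzvecs d \<and> finite T \<and> T \<noteq> {} \<longrightarrow> rk T + 1 \<ge> FS r d T)
    \<and> (\<forall>T v \<gamma>. T \<subseteq> nzvecs d \<and> finite T \<and> T \<noteq> {} \<and> v \<in> nzvecs d \<and> v \<notin> T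
          \<and> (\<forall>x\<in>T. phi r d v x = \<gamma>) \<longrightarrow> rk T \<ge> FS r d T)"
proof (intro conjI allI impI)
  show "lin_indep (set (take (length s - 1) s))" if "falling_star r d s" for s
    using that by (rule falling_star_independent)
  show "FS r d T \<le> rk T + 1" if "T \<subseteq> nzvecs d \<and> finite T \<and> T \<noteq> {}" for T
    using that by (intro FS_le_rk_Suc) simp
  show "FS r d T \<le> rk T"
    if "T \<subseteq> nzvecs d \<and> finite T \<and> T \<noteq> {} \<and> v \<in> nzvecs d \<and> v \<notin> T
      \<and> (\<forall>x\<in>T. phi r d v x = \<gamma>)" for T v \<gamma>
    using that by (intro FS_le_rk_if_monochromatic_apex[where \<gamma> = \<gamma>]) auto
qed

end
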